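(* Let $G=(V,A)$ be a graph, $\mathfrak n=\mathfrak n(G)$, and $\delta$ a Lie bialgebra structure on $\mathfrak n$ with $\delta(\mathfrak z)=0$ and such that for every vertex $e_i$, $\delta(e_i)=\sum_{\alpha\in A}\lambda_{i,\alpha}\,e_i\wedge\alpha+\omega_i$ for some scalars $\lambda_{i,\alpha}$ and some $\omega_i\in\Lambda^2\mathfrak z$ (i.e. the maps $D_\alpha$ with $\delta(v)\equiv\sum_\alpha D_\alpha(v)\wedge\alpha \bmod \Lambda^2\mathfrak z$ are diagonal in the vertex basis with $D_\alpha(e_i)=\lambda_{i,\alpha}e_i$). If $\alpha_0\in A$ joins $e_{i_0}$ and $e_{j_0}$, then $\lambda_{i_0,\alpha}=-\lambda_{j_0,\alpha}$ for all $\alpha\in A$ with $\alpha\ne\alpha_0$.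
   Context: $G=(V,A)$ is a finite simple graph without loops and without isolated vertices, $V=\{e_1,\dots,e_n\}$ ordered, each edge joining $e_i,e_j$ ($i<j$) oriented from $e_i$ to $e_j$. $\mathfrak n(G)$ over a field of characteristic zero has basis $V\cup A$, $[e_i,e_j]=\alpha$ if $\alpha$ goes from $e_i$ to $e_j$, $[e_i,e_j]=0$ if not adjacent, edges central; $\mathfrak z=\mathrm{span}(A)$. Lie bialgebra structure: linear $\delta:\mathfrak n\to\Lambda^2\mathfrak n$ with co-Jacobi and the 1-cocycle condition $\delta[x,y]=[\delta x,y]+[x,\delta y]$. *)

theory Defs
  imports Main
begin

text \<open>Graph: vertices V (a finite set of a linearly ordered type), edges A given as
  ordered pairs (i,j) with i < j (the edge oriented from e_i to e_j).
  Basis of n(G): Inl v for vertices, Inr a for edges.  Elements of n(G) are coordinate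
  functions supported on the basis; elements of Lambda^2 n(G) are skew-symmetric
  coefficient matrices w, where e_b wedge e_c corresponds to E_bc - E_cb.\<close>

definition graph :: "'v::linorder set \<Rightarrow> ('v \<times> 'v) set \<Rightarrow> bool" where
  "graph V A \<longleftrightarrow> finite V \<and> (\<forall>(i,j)\<in>A. i \<in> V \<and> j \<in> V \<and> i < j)
     \<and> (\<forall>v\<in>V. \<exists>a\<in>A. v = fst a \<or> v = snd a)"

definition basis :: "'v set \<Rightarrow> ('v \<times> 'v) set \<Rightarrow> ('v + ('v \<times> 'v)) set" where
  "basis V A = Inl ` V \<union> Inr ` A"

definition nvec :: "'v set \<Rightarrow> ('v \<times> 'v) set \<Rightarrow> (('v + ('v \<times> 'v)) \<Rightarrow> 'k::field) \<Rightarrow> bool" where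
  "nvec V A x \<longleftrightarrow> (\<forall>b. b \<notin> basis V A \<longrightarrow> x b = 0)"

definition lam2 :: "'v set \<Rightarrow> ('v \<times> 'v) set
    \<Rightarrow> (('v + ('v \<times> 'v)) \<Rightarrow> ('v + ('v \<times> 'v)) \<Rightarrow> 'k::field) \<Rightarrow> bool" where
  "lam2 V A w \<longleftrightarrow> (\<forall>p q. w p q = - w q p)
     \<and> (\<forall>p q. p \<notin> basis V A \<or> q \<notin> basis V A \<longrightarrow> w p q = 0)"

definition lam2z :: "('v \<times> 'v) set
    \<Rightarrow> (('v + ('v \<times> 'v)) \<Rightarrow> ('v + ('v \<times> 'v)) \<Rightarrow> 'k::field) \<Rightarrow> bool" where
  "lam2z A w \<longleftrightarrow> (\<forall>p q. w p q = - w q p)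
     \<and> (\<forall>p q. p \<notin> Inr ` A \<or> q \<notin> Inr ` A \<longrightarrow> w p q = 0)"

definition unitv :: "'b \<Rightarrow> 'b \<Rightarrow> 'k::field" where
  "unitv b = (\<lambda>c. if c = b then 1 else 0)"

definition wedge :: "('b \<Rightarrow> 'k::field) \<Rightarrow> ('b \<Rightarrow> 'k) \<Rightarrow> 'b \<Rightarrow> 'b \<Rightarrow> 'k" where
  "wedge x y = (\<lambda>p q. x p * y q - x q * y p)"

text \<open>Lie bracket of n(G): [e_i,e_j] = alpha if alpha = (i,j) in A, edges central.\<close>
definition br :: "('v \<times> 'v) set \<Rightarrow> (('v + ('v \<times> 'v)) \<Rightarrow> 'k::field)
    \<Rightarrow> (('v + ('v \<times> 'v)) \<Rightarrow> 'k) \<Rightarrow> ('v + ('v \<times> 'v)) \<Rightarrow> 'k" where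
  "br A x y = (\<lambda>b. case b of Inl _ \<Rightarrow> 0
      | Inr (i,j) \<Rightarrow> if (i,j) \<in> A then x (Inl i) * y (Inl j) - x (Inl j) * y (Inl i) else 0)"

text \<open>[w, z] for w in Lambda^2 n, z in n:  [a wedge b, z] = [a,z] wedge b + a wedge [b,z].\<close>
definition actR :: "'v set \<Rightarrow> ('v \<times> 'v) set
    \<Rightarrow> (('v + ('v \<times> 'v)) \<Rightarrow> ('v + ('v \<times> 'v)) \<Rightarrow> 'k::field)
    \<Rightarrow> (('v + ('v \<times> 'v)) \<Rightarrow> 'k) \<Rightarrow> ('v + ('v \<times> 'v)) \<Rightarrow> ('v + ('v \<times> 'v)) \<Rightarrow> 'k" where
  "actR V A w z = (\<lambda>p q. (\<Sum>b\<in>basis V A. w b q * br A (unitv b) z p)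
                      + (\<Sum>c\<in>basis V A. w p c * br A (unitv c) z q))"

text \<open>Lie bialgebra structure: delta linear n -> Lambda^2 n, 1-cocycle
  delta[x,y] = [delta x, y] + [x, delta y] (with [x, w] = - [w, x]), and co-Jacobi
  (the dual bracket on n^* satisfies Jacobi).\<close>
definition lie_bialg :: "'v::linorder set \<Rightarrow> ('v \<times> 'v) set
    \<Rightarrow> ((('v + ('v \<times> 'v)) \<Rightarrow> 'k::field) \<Rightarrow> ('v + ('v \<times> 'v)) \<Rightarrow> ('v + ('v \<times> 'v)) \<Rightarrow> 'k) \<Rightarrow> bool" where
  "lie_bialg V A \<delta> \<longleftrightarrow>
     (\<forall>x. nvec V A x \<longrightarrow> lam2 V A (\<delta> x))
   \<and> (\<forall>x y. nvec V A x \<longrightarrow> nvec V A y \<longrightarrow> \<delta> (\<lambda>b. x b + y b) = (\<lambda>p q. \<delta> x p q + \<delta> y p q))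
   \<and> (\<forall>c x. nvec V A x \<longrightarrow> \<delta> (\<lambda>b. c * x b) = (\<lambda>p q. c * \<delta> x p q))
   \<and> (\<forall>x y. nvec V A x \<longrightarrow> nvec V A y \<longrightarrow>
        \<delta> (br A x y) = (\<lambda>p q. actR V A (\<delta> x) y p q - actR V A (\<delta> y) x p q))
   \<and> (\<forall>p\<in>basis V A. \<forall>q\<in>basis V A. \<forall>r\<in>basis V A. \<forall>a\<in>basis V A.
        (\<Sum>s\<in>basis V A. \<delta> (unitv s) p q * \<delta> (unitv a) s r
                        + \<delta> (unitv s) q r * \<delta> (unitv a) s p
                        + \<delta> (unitv s) r p * \<delta> (unitv a) s q) = 0)"

end

theory Submission
  imports Defs
begin

text \<open>Apply the cocycle condition to [e_i0, e_j0] = alpha0: since delta(alpha0) = 0 we get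
  [delta e_i0, e_j0] = [delta e_j0, e_i0].  Since edges are central,
  [e_k \<and> beta, e_m] = [e_k, e_m] \<and> beta, so the coefficient of alpha0 \<and> alpha on the left is lam i0 alpha and
  on the right is - lam j0 alpha; the omega parts and the terms with beta \<noteq> alpha contribute
  nothing once alpha \<noteq> alpha0.\<close>

lemma graph_edgeD:
  assumes "graph V A" "(i, j) \<in> A"
  shows "i \<in> V" "j \<in> V" "i < j"
  using assms unfolding graph_def by auto

lemma graph_finite:
  assumes "graph V A"
  shows "finite A" "finite (basis V A)"
proof -
  have "A \<subseteq> V \<times> V" and "finite V"
    using assms unfolding graph_def by auto
  then show "finite A" by (meson finite_SigmaI finite_subset)
  with \<open>finite V\<close> show "finite (basis V A)" unfolding basis_def by simp
qed

lemma sum_mult_unitv: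
  assumes "finite S" "x \<in> S"
  shows "(\<Sum>b\<in>S. f b * unitv b x) = (f x :: 'k::field)"
proof -
  have "(\<Sum>b\<in>S. f b * unitv b x) = (\<Sum>b\<in>S. if x = b then f b else 0)"
    by (rule sum.cong) (auto simp: unitv_def)
  also have "\<dots> = f x" using assms by simp
  finally show ?thesis .
qed

lemma sum_br_unitv_vertex:
  assumes G: "graph V A" and e: "(i, j) \<in> A"
  shows "(\<Sum>c\<in>basis V A. f c * br A (unitv c) (unitv (Inl m)) (Inr (i, j)))
       = (if m = j then f (Inl i) else 0) - (if m = i then f (Inl j) else (0 :: 'k::field))"
proof -
  have fin: "finite (basis V A)" using graph_finite[OF G] by simp
  have ij: "Inl i \<in> basis V A" "Inl j \<in> basis V A"
    using graph_edgeD[OF G e] unfolding basis_def by auto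
  have "(\<Sum>c\<in>basis V A. f c * br A (unitv c) (unitv (Inl m)) (Inr (i, j)))
      = (\<Sum>c\<in>basis V A. (if m = j then f c else 0) * unitv c (Inl i))
      - (\<Sum>c\<in>basis V A. (if m = i then f c else 0) * unitv c (Inl j))"
    unfolding sum_subtractf[symmetric]
    by (rule sum.cong) (use e in \<open>auto simp: br_def unitv_def\<close>)
  then show ?thesis
    using sum_mult_unitv[OF fin ij(1), of "\<lambda>c. if m = j then f c else 0"]
      sum_mult_unitv[OF fin ij(2), of "\<lambda>c. if m = i then f c else 0"] by simp
qed

lemma actR_unitv_vertex_edges:
  assumes G: "graph V A" and "(i, j) \<in> A" "(a, b) \<in> A"
  shows "actR V A w (unitv (Inl m)) (Inr (i, j)) (Inr (a, b))
       = (if m = j then w (Inl i) (Inr (a, b)) else 0) - (if m = i then w (Inl j) (Inr (a, b)) else 0)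
       + (if m = b then w (Inr (i, j)) (Inl a) else 0) - (if m = a then w (Inr (i, j)) (Inl b) else 0)"
  unfolding actR_def using assms by (simp add: sum_br_unitv_vertex)

lemma diagonal_coeff_vertex_edge:
  fixes c :: "'v \<times> 'v \<Rightarrow> 'k::field"
  assumes "finite A" "\<gamma> \<in> A" "lam2z A \<omega>"
  shows "(\<Sum>\<beta>\<in>A. c \<beta> * wedge (unitv (Inl k)) (unitv (Inr \<beta>)) (Inl x) (Inr \<gamma>)) + \<omega> (Inl x) (Inr \<gamma>)
       = (if x = k then c \<gamma> else 0)"
    and "(\<Sum>\<beta>\<in>A. c \<beta> * wedge (unitv (Inl k)) (unitv (Inr \<beta>)) (Inr \<gamma>) (Inl x)) + \<omega> (Inr \<gamma>) (Inl x)
       = (if x = k then - c \<gamma> else 0)"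
proof -
  have \<omega>0: "\<omega> (Inl x) (Inr \<gamma>) = 0" "\<omega> (Inr \<gamma>) (Inl x) = 0"
    using assms(3) unfolding lam2z_def by blast+
  have "(\<Sum>\<beta>\<in>A. c \<beta> * wedge (unitv (Inl k)) (unitv (Inr \<beta>)) (Inl x) (Inr \<gamma>))
      = (\<Sum>\<beta>\<in>A. (if x = k then c \<beta> else 0) * unitv \<beta> \<gamma>)"
    by (rule sum.cong) (auto simp: wedge_def unitv_def)
  then show "(\<Sum>\<beta>\<in>A. c \<beta> * wedge (unitv (Inl k)) (unitv (Inr \<beta>)) (Inl x) (Inr \<gamma>)) + \<omega> (Inl x) (Inr \<gamma>)
       = (if x = k then c \<gamma> else 0)"
    using sum_mult_unitv[OF assms(1,2), of "\<lambda>\<beta>. if x = k then c \<beta> else 0"] \<omega>0 by simp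
  have "(\<Sum>\<beta>\<in>A. c \<beta> * wedge (unitv (Inl k)) (unitv (Inr \<beta>)) (Inr \<gamma>) (Inl x))
      = (\<Sum>\<beta>\<in>A. (if x = k then - c \<beta> else 0) * unitv \<beta> \<gamma>)"
    by (rule sum.cong) (auto simp: wedge_def unitv_def)
  then show "(\<Sum>\<beta>\<in>A. c \<beta> * wedge (unitv (Inl k)) (unitv (Inr \<beta>)) (Inr \<gamma>) (Inl x)) + \<omega> (Inr \<gamma>) (Inl x)
       = (if x = k then - c \<gamma> else 0)"
    using sum_mult_unitv[OF assms(1,2), of "\<lambda>\<beta>. if x = k then - c \<beta> else 0"] \<omega>0 by simp
qed

lemma br_unitv_edge:
  assumes "graph V A" "(i, j) \<in> A"
  shows "br A (unitv (Inl i)) (unitv (Inl j)) = unitv (Inr (i, j))"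
proof -
  have "i < j" using graph_edgeD[OF assms] by simp
  moreover have "(j, i) \<notin> A" using graph_edgeD[OF assms(1), of j i] \<open>i < j\<close> by auto
  ultimately show ?thesis
    using assms(2) by (auto simp: br_def unitv_def fun_eq_iff split: sum.splits)
qed

lemma nvec_unitv_vertex: "k \<in> V \<Longrightarrow> nvec V A (unitv (Inl k))"
  unfolding nvec_def basis_def unitv_def by auto

lemma cocycle_edge:
  assumes G: "graph V A" and bialg: "lie_bialg V A \<delta>" and e: "(i, j) \<in> A"
  shows "\<delta> (unitv (Inr (i, j))) = (\<lambda>p q. actR V A (\<delta> (unitv (Inl i))) (unitv (Inl j)) p q
                                        - actR V A (\<delta> (unitv (Inl j))) (unitv (Inl i)) p q)"
proof -
  have "\<forall>x y. nvec V A x \<longrightarrow> nvec V A y \<longrightarrow>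
      \<delta> (br A x y) = (\<lambda>p q. actR V A (\<delta> x) y p q - actR V A (\<delta> y) x p q)"
    using bialg unfolding lie_bialg_def by (elim conjE)
  then show ?thesis
    using nvec_unitv_vertex graph_edgeD[OF G e] br_unitv_edge[OF G e] by metis
qed

theorem mainTheorem15:
  fixes V :: "'v::linorder set" and A :: "('v \<times> 'v) set"
    and \<delta> :: "(('v + ('v \<times> 'v)) \<Rightarrow> 'k::field_char_0) \<Rightarrow> ('v + ('v \<times> 'v)) \<Rightarrow> ('v + ('v \<times> 'v)) \<Rightarrow> 'k"
    and lam :: "'v \<Rightarrow> ('v \<times> 'v) \<Rightarrow> 'k"
    and \<omega> :: "'v \<Rightarrow> ('v + ('v \<times> 'v)) \<Rightarrow> ('v + ('v \<times> 'v)) \<Rightarrow> 'k"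
  assumes G: "graph V A"
    and bialg: "lie_bialg V A \<delta>"
    and z0: "\<forall>a\<in>A. \<delta> (unitv (Inr a)) = (\<lambda>p q. 0)"
    and om: "\<forall>i\<in>V. lam2z A (\<omega> i)"
    and diag: "\<forall>i\<in>V. \<delta> (unitv (Inl i)) =
        (\<lambda>p q. (\<Sum>\<alpha>\<in>A. lam i \<alpha> * wedge (unitv (Inl i)) (unitv (Inr \<alpha>)) p q) + \<omega> i p q)"
    and a0: "(i0, j0) \<in> A"
  shows "\<forall>\<alpha>\<in>A. \<alpha> \<noteq> (i0, j0) \<longrightarrow> lam i0 \<alpha> = - lam j0 \<alpha>"
proof (intro ballI impI)
  fix \<alpha> assume "\<alpha> \<in> A" and ne: "\<alpha> \<noteq> (i0, j0)"
  then obtain a b where \<alpha>: "\<alpha> = (a, b)" "(a, b) \<in> A" by (cases \<alpha>) auto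
  have ij: "i0 \<in> V" "j0 \<in> V" "i0 < j0" using graph_edgeD[OF G a0] by auto
  have "a < b" using graph_edgeD[OF G \<alpha>(2)] by simp
  have coeff: "\<delta> (unitv (Inl k)) (Inl x) (Inr \<gamma>) = (if x = k then lam k \<gamma> else 0)"
    "\<delta> (unitv (Inl k)) (Inr \<gamma>) (Inl x) = (if x = k then - lam k \<gamma> else 0)"
    if "k \<in> V" "\<gamma> \<in> A" for k x \<gamma>
    using diagonal_coeff_vertex_edge[OF graph_finite(1)[OF G] that(2), of "\<omega> k" "lam k" k x]
      diag om that by simp_all
  have "0 = actR V A (\<delta> (unitv (Inl i0))) (unitv (Inl j0)) (Inr (i0, j0)) (Inr (a, b))
          - actR V A (\<delta> (unitv (Inl j0))) (unitv (Inl i0)) (Inr (i0, j0)) (Inr (a, b))"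
    using cocycle_edge[OF G bialg a0] z0 a0 by (metis (no_types, lifting))
  also have "\<dots> = lam i0 \<alpha> + lam j0 \<alpha>"
    using ij ne \<open>a < b\<close> \<alpha> a0
    by (auto simp: actR_unitv_vertex_edges[OF G] coeff)
  finally show "lam i0 \<alpha> = - lam j0 \<alpha>" by (simp add: eq_neg_iff_add_eq_0)
qed

end
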